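(* Let $Q:\mathcal{Z}\times\Theta\to\mathbb{R}$ be measurable with $A(\theta)=EQ(Z,\theta)$ existing for all $\theta\in\Theta$ and $A(e_1),\dots,A(e_M)$ finite, and let $Q_1(z,\theta,\theta')=Q(z,\theta)-Q(z,\theta')$. Assume that for some $\beta>0$ there is a Borel function $\Psi_\beta:\Theta\times\Theta\to\mathbb{R}_+$ such that $\theta\mapsto\Psi_\beta(\theta,\theta')$ is concave on $\Theta$ for each fixed $\theta'\in\Theta$, $\Psi_\beta(\theta,\theta)=1$, and $E\exp(-Q_1(Z,\theta,\theta')/\beta)\le\Psi_\beta(\theta,\theta')$ for all $\theta,\theta'\in\Theta$. Then the mirror averaging aggregate $\hat\theta_n$ with parameter $\beta$ satisfies, for any $M\ge2$, $n\ge1$, $$E_{n-1}A(\hat\theta_n)\le\min_{1\le j\le M}A(e_j)+\frac{\beta\log M}{n}.$$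
   Context: $(\mathcal{Z},\mathfrak{F})$ is a measurable space, $M\ge2$, $\Theta=\{\theta\in\mathbb{R}^M:\sum_j\theta^{(j)}=1,\theta^{(j)}\ge0\}$, $e_j$ the $j$th unit vector, $z^{(j)}$ the $j$th component of $z\in\mathbb{R}^M$. $Z$ is a $\mathcal{Z}$-valued random variable with distribution $P$, expectation $E$; $Z_1,\dots,Z_n$ i.i.d. copies of $Z$; $E_{n-1}$ is expectation w.r.t. $(Z_1,\dots,Z_{n-1})$. Mirror averaging aggregate with parameter $\beta>0$: $W_\beta(\zeta)=\beta\log\big(\frac1M\sum_{j}e^{-\zeta^{(j)}/\beta}\big)$; $\zeta_0=0$, $\zeta_i=\zeta_{i-1}+u_i$ for $i=1,\dots,n-1$ with $u_i=(Q(Z_i,e_1),\dots,Q(Z_i,e_M))^\top$; $\theta_i=-\nabla W_\beta(\zeta_i)$, i.e. $\theta_i^{(j)}=e^{-\zeta_i^{(j)}/\beta}/\sum_ke^{-\zeta_i^{(k)}/\beta}$, for $i=0,\dots,n-1$; $\hat\theta_n=\frac1n\sum_{i=1}^n\theta_{i-1}$. *)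

theory Defs
  imports "HOL-Analysis.Analysis" "HOL-Probability.Probability"
begin

definition Theta :: "(real ^ 'm) set" where
  "Theta = {\<theta>. (\<forall>j. \<theta> $ j \<ge> 0) \<and> (\<Sum>j\<in>UNIV. \<theta> $ j) = 1}"

text \<open>Extended-real valued expectation: positive part minus negative part
  (in ereal; note that infinity minus anything is infinity in Isabelle).\<close>
definition ext_expectation :: "'a measure \<Rightarrow> ('a \<Rightarrow> real) \<Rightarrow> ereal" where
  "ext_expectation N f =
     enn2ereal (\<integral>\<^sup>+ x. ennreal (f x) \<partial>N) - enn2ereal (\<integral>\<^sup>+ x. ennreal (- f x) \<partial>N)"

definition ext_expectation_exists :: "'a measure \<Rightarrow> ('a \<Rightarrow> real) \<Rightarrow> bool" where
  "ext_expectation_exists N f \<longleftrightarrow>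
     (\<integral>\<^sup>+ x. ennreal (f x) \<partial>N) \<noteq> \<infinity> \<or> (\<integral>\<^sup>+ x. ennreal (- f x) \<partial>N) \<noteq> \<infinity>"

definition ext_expectation_ereal :: "'a measure \<Rightarrow> ('a \<Rightarrow> ereal) \<Rightarrow> ereal" where
  "ext_expectation_ereal N g =
     enn2ereal (\<integral>\<^sup>+ x. e2ennreal (g x) \<partial>N) - enn2ereal (\<integral>\<^sup>+ x. e2ennreal (- g x) \<partial>N)"

text \<open>Mirror averaging. A sample path is omega :: nat => 'z, omega i = Z_i.
  e_j is axis j 1.  u_i = (Q(Z_i,e_1),...,Q(Z_i,e_M)).\<close>
definition ma_u :: "('z \<Rightarrow> real ^ 'm \<Rightarrow> real) \<Rightarrow> 'z \<Rightarrow> real ^ 'm" where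
  "ma_u Q z = (\<chi> j. Q z (axis j 1))"

definition ma_zeta :: "('z \<Rightarrow> real ^ 'm \<Rightarrow> real) \<Rightarrow> (nat \<Rightarrow> 'z) \<Rightarrow> nat \<Rightarrow> real ^ 'm" where
  "ma_zeta Q \<omega> i = (\<Sum>k\<in>{1..i}. ma_u Q (\<omega> k))"

text \<open>theta_i = - grad W_beta(zeta_i), written out explicitly.\<close>
definition ma_theta :: "real \<Rightarrow> ('z \<Rightarrow> real ^ 'm \<Rightarrow> real) \<Rightarrow> (nat \<Rightarrow> 'z) \<Rightarrow> nat \<Rightarrow> real ^ 'm" where
  "ma_theta \<beta> Q \<omega> i = (\<chi> j. exp (- (ma_zeta Q \<omega> i $ j) / \<beta>) /
                               (\<Sum>k\<in>UNIV. exp (- (ma_zeta Q \<omega> i $ k) / \<beta>)))"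

definition ma_hat :: "real \<Rightarrow> ('z \<Rightarrow> real ^ 'm \<Rightarrow> real) \<Rightarrow> nat \<Rightarrow> (nat \<Rightarrow> 'z) \<Rightarrow> real ^ 'm" where
  "ma_hat \<beta> Q n \<omega> = (1 / real n) *\<^sub>R (\<Sum>i\<in>{1..n}. ma_theta \<beta> Q \<omega> (i - 1))"

end

theory Submission
  imports Defs
begin

(*
  Let W z = beta * ln ((1/M) * sum_k exp (- z_k / beta)) be the potential of the algorithm, so that
  theta_i = - grad W (zeta_i). For every sample point z the identity
    beta * ln (sum_k theta_i^(k) * exp ((Q(z, theta_i) - Q(z, e_k)) / beta))
      = Q(z, theta_i) + W (zeta_i + u z) - W zeta_i,
  together with x <= e^x - 1 and ln y <= y - 1, bounds Q(z, hat theta_n) by the average over i < n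
  of two exponential terms and the potential drop W zeta_i - W (zeta_i + u z). Once integrated in z,
  the exponential terms have nonpositive total: this is where the bound by Psi, the concavity of Psi
  in its first argument and Psi(theta, theta) = 1 enter, once at hat theta_n (the average of the
  theta_i) and once at each theta_i (a mixture of the vertices e_k). As Z_{i+1} is independent of
  zeta_i, the expected potential drops telescope to W 0 - E W (zeta_{n-1} + u Z_n), which is at most
  beta * ln M + n * A(e_j) for every j.
*)

lemma ext_expectation_integrable:
  assumes "integrable N f"
  shows "ext_expectation N f = ereal (integral\<^sup>L N f)"
proof -
  have "(\<integral>\<^sup>+ x. ennreal (f x) \<partial>N) < \<infinity>" "(\<integral>\<^sup>+ x. ennreal (- f x) \<partial>N) < \<infinity>"
    using assms unfolding real_integrable_def by (auto simp: top.not_eq_extremum)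
  then show ?thesis
    unfolding ext_expectation_def real_lebesgue_integral_def[OF assms]
    by (auto simp: less_top_ennreal enn2ereal_ennreal)
qed

lemma ext_expectation_mono:
  assumes "\<And>x. x \<in> space N \<Longrightarrow> f x \<le> g x"
  shows "ext_expectation N f \<le> ext_expectation N g"
proof -
  have "(\<integral>\<^sup>+ x. ennreal (f x) \<partial>N) \<le> (\<integral>\<^sup>+ x. ennreal (g x) \<partial>N)"
    "(\<integral>\<^sup>+ x. ennreal (- g x) \<partial>N) \<le> (\<integral>\<^sup>+ x. ennreal (- f x) \<partial>N)"
    using assms by (auto intro!: nn_integral_mono ennreal_leI)
  then show ?thesis
    unfolding ext_expectation_def by (intro ereal_minus_mono) (simp_all add: less_eq_ennreal.rep_eq)
qed

lemma ext_expectation_le_integral: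
  assumes "\<And>x. x \<in> space N \<Longrightarrow> f x \<le> g x" "integrable N g"
  shows "ext_expectation N f \<le> ereal (integral\<^sup>L N g)"
  using ext_expectation_mono[of N f g] assms ext_expectation_integrable[OF assms(2)] by simp

lemma ext_expectation_ereal_le_integral:
  assumes "\<And>x. x \<in> space N \<Longrightarrow> F x \<le> ereal (g x)" "integrable N g"
  shows "ext_expectation_ereal N F \<le> ereal (integral\<^sup>L N g)"
proof -
  have "(\<integral>\<^sup>+ x. e2ennreal (F x) \<partial>N) \<le> (\<integral>\<^sup>+ x. ennreal (g x) \<partial>N)"
    "(\<integral>\<^sup>+ x. ennreal (- g x) \<partial>N) \<le> (\<integral>\<^sup>+ x. e2ennreal (- F x) \<partial>N)"
    using assms(1) by (auto intro!: nn_integral_mono e2ennreal_mono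
        simp flip: e2ennreal_ereal uminus_ereal.simps(1))
  then have "ext_expectation_ereal N F \<le> ext_expectation N g"
    unfolding ext_expectation_ereal_def ext_expectation_def
    by (intro ereal_minus_mono) (simp_all add: less_eq_ennreal.rep_eq)
  then show ?thesis using ext_expectation_integrable[OF assms(2)] by simp
qed

lemma integrable_nonneg_nn_integral_le:
  fixes f :: "'a \<Rightarrow> real"
  assumes "f \<in> borel_measurable M" "\<And>x. 0 \<le> f x" "c \<ge> 0"
    and "(\<integral>\<^sup>+ x. ennreal (f x) \<partial>M) \<le> ennreal c"
  shows "integrable M f" and "integral\<^sup>L M f \<le> c"
proof -
  show int: "integrable M f"
    using assms by (intro integrableI_bounded) (auto simp: le_less_trans)
  have "ennreal (integral\<^sup>L M f) \<le> ennreal c"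
    using assms(4) nn_integral_eq_integral[OF int] assms(2) by simp
  then show "integral\<^sup>L M f \<le> c" using assms(3) by simp
qed

definition ma_W :: "real \<Rightarrow> real ^ 'm \<Rightarrow> real" where
  "ma_W \<beta> \<zeta> = \<beta> * ln ((\<Sum>k\<in>UNIV. exp (- (\<zeta> $ k) / \<beta>)) / real CARD('m))"

definition ma_weights :: "real \<Rightarrow> real ^ 'm \<Rightarrow> real ^ 'm" where
  "ma_weights \<beta> \<zeta> = (\<chi> j. exp (- (\<zeta> $ j) / \<beta>) / (\<Sum>k\<in>UNIV. exp (- (\<zeta> $ k) / \<beta>)))"

lemma sum_exp_pos: "(\<Sum>k\<in>(UNIV :: 'm :: finite set). exp (f k :: real)) > 0"
  by (intro sum_pos) auto

lemma ma_theta_eq_ma_weights: "ma_theta \<beta> Q \<omega> i = ma_weights \<beta> (ma_zeta Q \<omega> i)"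
  by (simp add: ma_theta_def ma_weights_def)

lemma ma_W_zero: "ma_W \<beta> 0 = 0"
  by (simp add: ma_W_def)

lemma ma_W_ge:
  assumes "\<beta> > 0"
  shows "- (\<zeta> $ j) - \<beta> * ln (real CARD('m)) \<le> ma_W \<beta> (\<zeta> :: real ^ 'm)"
proof -
  let ?S = "\<Sum>k\<in>UNIV. exp (- (\<zeta> $ k) / \<beta>)"
  have S: "?S > 0" by (rule sum_exp_pos)
  have "exp (- (\<zeta> $ j) / \<beta>) \<le> ?S"
    by (rule member_le_sum) auto
  then have "- (\<zeta> $ j) / \<beta> \<le> ln ?S"
    using S by (simp add: ln_ge_iff)
  then show ?thesis
    using assms S unfolding ma_W_def by (simp add: ln_div field_simps)
qed

lemma ma_W_add_le:
  assumes "\<beta> > 0"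
  shows "ma_W \<beta> (\<zeta> + q) \<le> ma_W \<beta> \<zeta> + (\<Sum>k\<in>UNIV. \<bar>q $ k\<bar>)"
proof -
  let ?s = "\<Sum>k\<in>UNIV. \<bar>q $ k\<bar>"
  let ?S = "\<Sum>k\<in>UNIV. exp (- (\<zeta> $ k) / \<beta>)"
  let ?T = "\<Sum>k\<in>UNIV. exp (- ((\<zeta> + q) $ k) / \<beta>)"
  have S: "?S > 0" "?T > 0" by (rule sum_exp_pos)+
  have "exp (- ((\<zeta> + q) $ k) / \<beta>) \<le> exp (?s / \<beta>) * exp (- (\<zeta> $ k) / \<beta>)" for k
  proof -
    have "\<bar>q $ k\<bar> \<le> ?s" by (rule member_le_sum) auto
    then have "- ((\<zeta> + q) $ k) / \<beta> \<le> ?s / \<beta> + - (\<zeta> $ k) / \<beta>"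
      using assms by (simp add: field_simps)
    then show ?thesis by (simp flip: exp_add)
  qed
  then have "?T \<le> exp (?s / \<beta>) * ?S"
    by (simp add: sum_distrib_left sum_mono)
  then have "ln ?T \<le> ln (exp (?s / \<beta>) * ?S)"
    using S by (subst ln_le_cancel_iff) auto
  then have "ln ?T \<le> ?s / \<beta> + ln ?S"
    using S by (simp add: ln_mult)
  then show ?thesis
    using assms S unfolding ma_W_def by (simp add: ln_div field_simps)
qed

lemma abs_ma_W_le:
  assumes "\<beta> > 0"
  shows "\<bar>ma_W \<beta> \<zeta>\<bar> \<le> (\<Sum>k\<in>UNIV. \<bar>\<zeta> $ k\<bar>)"
  using ma_W_add_le[OF assms, of 0 \<zeta>] ma_W_add_le[OF assms, of \<zeta> "- \<zeta>"] by (simp add: ma_W_zero)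

lemma ma_weights_pos: "ma_weights \<beta> \<zeta> $ k > 0"
  unfolding ma_weights_def using sum_exp_pos[of "\<lambda>k. - (\<zeta> $ k) / \<beta>"] by simp

lemma ln_ma_weights_exp:
  assumes "\<beta> \<noteq> 0"
  shows "\<beta> * ln (\<Sum>k\<in>UNIV. ma_weights \<beta> \<zeta> $ k * exp (- (q $ k - a) / \<beta>))
       = a + ma_W \<beta> (\<zeta> + q) - ma_W \<beta> \<zeta>"
proof -
  let ?S = "\<Sum>k\<in>UNIV. exp (- (\<zeta> $ k) / \<beta>)"
  let ?T = "\<Sum>k\<in>UNIV. exp (- ((\<zeta> + q) $ k) / \<beta>)"
  have "(\<Sum>k\<in>UNIV. ma_weights \<beta> \<zeta> $ k * exp (- (q $ k - a) / \<beta>)) = exp (a / \<beta>) * ?T / ?S"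
    unfolding ma_weights_def
    by (simp add: sum_divide_distrib sum_distrib_left diff_divide_distrib add_divide_distrib
        exp_diff exp_add[symmetric] algebra_simps)
  then show ?thesis
    using assms sum_exp_pos[of "\<lambda>k. - (\<zeta> $ k) / \<beta>"] sum_exp_pos[of "\<lambda>k. - ((\<zeta> + q) $ k) / \<beta>"]
    unfolding ma_W_def by (simp add: ln_div ln_mult algebra_simps)
qed

lemma ma_weights_step_le:
  assumes "\<beta> > 0"
  shows "b \<le> \<beta> * (exp (- (a - b) / \<beta>) - 1)
           + \<beta> * ((\<Sum>k\<in>UNIV. ma_weights \<beta> \<zeta> $ k * exp (- (q $ k - a) / \<beta>)) - 1)
           + (ma_W \<beta> \<zeta> - ma_W \<beta> (\<zeta> + q))"
proof -
  let ?E = "\<Sum>k\<in>UNIV. ma_weights \<beta> \<zeta> $ k * exp (- (q $ k - a) / \<beta>)"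
  have "- (a - b) / \<beta> \<le> exp (- (a - b) / \<beta>) - 1"
    using exp_ge_add_one_self[of "- (a - b) / \<beta>"] by linarith
  then have "b - a \<le> \<beta> * (exp (- (a - b) / \<beta>) - 1)"
    using assms by (simp add: field_simps)
  moreover have "ln ?E \<le> ?E - 1"
    using ma_weights_pos by (intro ln_le_minus_one sum_pos mult_pos_pos) auto
  then have "a + ma_W \<beta> (\<zeta> + q) - ma_W \<beta> \<zeta> \<le> \<beta> * (?E - 1)"
    using assms ln_ma_weights_exp[of \<beta> \<zeta> q a] mult_left_mono[of "ln ?E" "?E - 1" \<beta>] by simp
  ultimately show ?thesis by linarith
qed

lemma axis_in_Theta: "axis j 1 \<in> Theta"
  unfolding Theta_def by (auto simp: axis_def)

lemma ma_weights_in_Theta: "ma_weights \<beta> \<zeta> \<in> Theta"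
  unfolding Theta_def using ma_weights_pos[of \<beta> \<zeta>] sum_exp_pos
  by (auto simp: ma_weights_def less_imp_le sum_divide_distrib[symmetric])

lemma convex_Theta: "convex Theta"
  unfolding convex_def Theta_def
  by (auto simp: sum.distrib simp flip: sum_distrib_left)

lemma concave_on_Theta_vertices:
  assumes "concave_on Theta f" "\<theta> \<in> Theta"
  shows "(\<Sum>k\<in>UNIV. \<theta> $ k * f (axis k 1)) \<le> f \<theta>"
proof -
  have "(\<Sum>k\<in>UNIV. \<theta> $ k * f (axis k 1)) \<le> f (\<Sum>k\<in>UNIV. \<theta> $ k *\<^sub>R axis k 1)"
    using assms axis_in_Theta by (intro concave_on_sum) (auto simp: Theta_def)
  also have "(\<Sum>k\<in>UNIV. \<theta> $ k *\<^sub>R axis k 1) = \<theta>"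
    using basis_expansion[of \<theta>] by (simp add: scalar_mult_eq_scaleR)
  finally show ?thesis .
qed

lemma ma_hat_eq_average:
  "ma_hat \<beta> Q n \<omega> = (\<Sum>i<n. (1 / real n) *\<^sub>R ma_theta \<beta> Q \<omega> i)"
  unfolding ma_hat_def scaleR_sum_right
  by (rule sum.reindex_bij_witness[of _ Suc "\<lambda>i. i - 1"]) auto

lemma ma_hat_in_Theta:
  assumes "n \<ge> 1"
  shows "ma_hat \<beta> Q n \<omega> \<in> Theta"
  unfolding ma_hat_eq_average ma_theta_eq_ma_weights
  using assms by (intro convex_sum[OF _ convex_Theta]) (auto simp: ma_weights_in_Theta)

lemma measurable_slice_restrict_space:
  assumes "(\<lambda>(z, \<theta>). Q z \<theta>) \<in> borel_measurable (M \<Otimes>\<^sub>M restrict_space borel S)" "\<theta> \<in> S"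
  shows "(\<lambda>z. Q z \<theta>) \<in> borel_measurable M"
  using measurable_comp[OF measurable_Pair2' assms(1), of \<theta>] assms(2)
  by (simp add: space_restrict_space comp_def)

lemma
  fixes f :: "'a \<Rightarrow> real"
  assumes "prob_space M" "k \<in> I" "integrable M f"
  shows integrable_PiM_component: "integrable (PiM I (\<lambda>_. M)) (\<lambda>\<omega>. f (\<omega> k))"
    and integral_PiM_component: "(\<integral>\<omega>. f (\<omega> k) \<partial>PiM I (\<lambda>_. M)) = integral\<^sup>L M f"
proof -
  have distr: "distr (PiM I (\<lambda>_. M)) M (\<lambda>\<omega>. \<omega> k) = M"
    using distr_PiM_component[of I "\<lambda>_. M" k] assms(1,2) by simp
  have meas: "(\<lambda>\<omega>. \<omega> k) \<in> measurable (PiM I (\<lambda>_. M)) M"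
    using assms(2) by (rule measurable_component_singleton)
  have f: "f \<in> borel_measurable M" using assms(3) by auto
  show "integrable (PiM I (\<lambda>_. M)) (\<lambda>\<omega>. f (\<omega> k))"
    using integrable_distr_eq[OF meas f] distr assms(3) by simp
  show "(\<integral>\<omega>. f (\<omega> k) \<partial>PiM I (\<lambda>_. M)) = integral\<^sup>L M f"
    using integral_distr[OF meas f] distr by simp
qed

lemma integrable_ma_W:
  fixes \<zeta> :: "'a \<Rightarrow> real ^ 'm"
  assumes "\<beta> > 0" "\<And>k. integrable M (\<lambda>x. \<zeta> x $ k)"
  shows "integrable M (\<lambda>x. ma_W \<beta> (\<zeta> x))"
proof (rule Bochner_Integration.integrable_bound)
  have [measurable]: "(\<lambda>x. \<zeta> x $ k) \<in> borel_measurable M" for k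
    using assms(2) by auto
  show "integrable M (\<lambda>x. \<Sum>k\<in>UNIV. \<bar>\<zeta> x $ k\<bar>)"
    using assms(2) by auto
  show "(\<lambda>x. ma_W \<beta> (\<zeta> x)) \<in> borel_measurable M"
    unfolding ma_W_def by measurable
  show "AE x in M. norm (ma_W \<beta> (\<zeta> x)) \<le> norm (\<Sum>k\<in>UNIV. \<bar>\<zeta> x $ k\<bar>)"
    by (intro AE_I2) (simp add: abs_ma_W_le[OF assms(1)])
qed

lemma ma_zeta_0: "ma_zeta Q \<omega> 0 = 0"
  by (simp add: ma_zeta_def)

lemma ma_zeta_Suc: "ma_zeta Q \<omega> (Suc i) = ma_zeta Q \<omega> i + ma_u Q (\<omega> (Suc i))"
  by (simp add: ma_zeta_def add.commute)

lemma ma_zeta_fun_upd: "i < j \<Longrightarrow> ma_zeta Q (\<omega> (j := y)) i = ma_zeta Q \<omega> i"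
  unfolding ma_zeta_def by (intro sum.cong) auto

lemma ma_zeta_component: "ma_zeta Q \<omega> i $ k = (\<Sum>l\<in>{1..i}. Q (\<omega> l) (axis k 1))"
  by (simp add: ma_zeta_def ma_u_def)

locale mirror_averaging = prob_space P for P :: "'z measure" +
  fixes Q :: "'z \<Rightarrow> real ^ 'm \<Rightarrow> real" and \<beta> :: real
  assumes integrable_vertex: "\<And>j. integrable P (\<lambda>z. Q z (axis j 1))"
    and beta_pos: "\<beta> > 0"
begin

lemma prob_space_samples: "prob_space (PiM I (\<lambda>_. P))"
  by (intro prob_space_PiM prob_space_axioms)

lemma
  assumes "{1..i} \<subseteq> I"
  shows integrable_ma_zeta: "integrable (PiM I (\<lambda>_. P)) (\<lambda>\<omega>. ma_zeta Q \<omega> i $ k)"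
    and integral_ma_zeta: "(\<integral>\<omega>. ma_zeta Q \<omega> i $ k \<partial>PiM I (\<lambda>_. P)) = i * (\<integral>z. Q z (axis k 1) \<partial>P)"
proof -
  have "integrable (PiM I (\<lambda>_. P)) (\<lambda>\<omega>. Q (\<omega> l) (axis k 1))"
    and "(\<integral>\<omega>. Q (\<omega> l) (axis k 1) \<partial>PiM I (\<lambda>_. P)) = (\<integral>z. Q z (axis k 1) \<partial>P)" if "l \<in> {1..i}" for l
    using assms that integrable_PiM_component[OF prob_space_axioms _ integrable_vertex, of l I]
      integral_PiM_component[OF prob_space_axioms _ integrable_vertex, of l I] by auto
  then show "integrable (PiM I (\<lambda>_. P)) (\<lambda>\<omega>. ma_zeta Q \<omega> i $ k)"
    and "(\<integral>\<omega>. ma_zeta Q \<omega> i $ k \<partial>PiM I (\<lambda>_. P)) = i * (\<integral>z. Q z (axis k 1) \<partial>P)"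
    unfolding ma_zeta_component by (auto simp: Bochner_Integration.integral_sum)
qed

lemma integrable_ma_W_shift: "integrable P (\<lambda>z. ma_W \<beta> (c + ma_u Q z))"
  using integrable_vertex by (intro integrable_ma_W beta_pos) (simp add: ma_u_def)

lemma integral_ma_W_shift_ge:
  "- (c $ j) - (\<integral>z. Q z (axis j 1) \<partial>P) - \<beta> * ln (real CARD('m))
     \<le> (\<integral>z. ma_W \<beta> (c + ma_u Q z) \<partial>P)"
proof -
  have "(\<integral>z. - (c $ j) - Q z (axis j 1) - \<beta> * ln (real CARD('m)) \<partial>P) \<le> (\<integral>z. ma_W \<beta> (c + ma_u Q z) \<partial>P)"
    using integrable_vertex integrable_ma_W_shift ma_W_ge[OF beta_pos, of "c + ma_u Q _" j]
    by (intro integral_mono) (auto simp: ma_u_def)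
  then show ?thesis
    using integrable_vertex by (simp add: prob_space)
qed

lemma integrable_integral_ma_W_shift:
  fixes \<zeta> :: "'a \<Rightarrow> real ^ 'm"
  assumes M: "prob_space M" and \<zeta>: "\<And>k. integrable M (\<lambda>x. \<zeta> x $ k)"
  shows "integrable M (\<lambda>x. \<integral>z. ma_W \<beta> (\<zeta> x + ma_u Q z) \<partial>P)"
proof (rule Bochner_Integration.integrable_bound)
  interpret M: prob_space M by (rule M)
  let ?b = "\<lambda>z. \<Sum>k\<in>UNIV. \<bar>Q z (axis k 1)\<bar>"
  have b: "integrable P ?b"
    using integrable_vertex by auto
  have [measurable]: "(\<lambda>x. \<zeta> x $ k) \<in> borel_measurable M" "(\<lambda>z. Q z (axis k 1)) \<in> borel_measurable P" for k
    using \<zeta> integrable_vertex by auto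
  show "integrable M (\<lambda>x. (\<Sum>k\<in>UNIV. \<bar>\<zeta> x $ k\<bar>) + integral\<^sup>L P ?b)"
    using \<zeta> by auto
  have "ma_W \<beta> (\<zeta> x + ma_u Q z)
      = \<beta> * ln ((\<Sum>k\<in>UNIV. exp (- (\<zeta> x $ k + Q z (axis k 1)) / \<beta>)) / real CARD('m))" for x z
    by (simp add: ma_W_def ma_u_def)
  then show "(\<lambda>x. \<integral>z. ma_W \<beta> (\<zeta> x + ma_u Q z) \<partial>P) \<in> borel_measurable M"
    by simp measurable
  have "\<bar>ma_W \<beta> (\<zeta> x + ma_u Q z)\<bar> \<le> (\<Sum>k\<in>UNIV. \<bar>\<zeta> x $ k\<bar>) + ?b z" for x z
  proof -
    have "\<bar>ma_W \<beta> (\<zeta> x + ma_u Q z)\<bar> \<le> (\<Sum>k\<in>UNIV. \<bar>\<zeta> x $ k + Q z (axis k 1)\<bar>)"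
      using abs_ma_W_le[OF beta_pos, of "\<zeta> x + ma_u Q z"] by (simp add: ma_u_def)
    also have "\<dots> \<le> (\<Sum>k\<in>UNIV. \<bar>\<zeta> x $ k\<bar>) + ?b z"
      by (simp add: sum_mono abs_triangle_ineq flip: sum.distrib)
    finally show ?thesis .
  qed
  then have "norm (\<integral>z. ma_W \<beta> (\<zeta> x + ma_u Q z) \<partial>P) \<le> (\<integral>z. (\<Sum>k\<in>UNIV. \<bar>\<zeta> x $ k\<bar>) + ?b z \<partial>P)" for x
    using integrable_ma_W_shift b by (intro order_trans[OF integral_norm_bound integral_mono]) auto
  then show "AE x in M. norm (\<integral>z. ma_W \<beta> (\<zeta> x + ma_u Q z) \<partial>P)
      \<le> norm ((\<Sum>k\<in>UNIV. \<bar>\<zeta> x $ k\<bar>) + integral\<^sup>L P ?b)"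
    using b by (intro AE_I2) (simp add: prob_space)
qed

lemma
  assumes "{1..i} \<subseteq> I"
  shows integrable_ma_W_ma_zeta: "integrable (PiM I (\<lambda>_. P)) (\<lambda>\<omega>. ma_W \<beta> (ma_zeta Q \<omega> i))"
    and integrable_integral_ma_W_ma_zeta:
      "integrable (PiM I (\<lambda>_. P)) (\<lambda>\<omega>. \<integral>z. ma_W \<beta> (ma_zeta Q \<omega> i + ma_u Q z) \<partial>P)"
  using integrable_ma_zeta[OF assms]
  by (auto intro!: integrable_ma_W[OF beta_pos] integrable_integral_ma_W_shift[OF prob_space_samples])

lemma integral_ma_W_step:
  assumes "finite I" "{1..Suc i} \<subseteq> I"
  shows "(\<integral>\<omega>. (\<integral>z. ma_W \<beta> (ma_zeta Q \<omega> i + ma_u Q z) \<partial>P) \<partial>PiM I (\<lambda>_. P))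
       = (\<integral>\<omega>. ma_W \<beta> (ma_zeta Q \<omega> (Suc i)) \<partial>PiM I (\<lambda>_. P))"
proof -
  interpret product_sigma_finite "\<lambda>_. P" by unfold_locales
  define J where "J = I - {Suc i}"
  have I: "I = insert (Suc i) J" "Suc i \<notin> J" "finite J"
    using assms unfolding J_def by auto
  have sub: "{1..i} \<subseteq> I" using assms(2) by auto
  let ?g = "\<lambda>\<omega>. \<integral>z. ma_W \<beta> (ma_zeta Q \<omega> i + ma_u Q z) \<partial>P"
  have "(\<integral>\<omega>. ma_W \<beta> (ma_zeta Q \<omega> (Suc i)) \<partial>PiM I (\<lambda>_. P))
      = (\<integral>\<omega>. (\<integral>z. ma_W \<beta> (ma_zeta Q (\<omega> (Suc i := z)) (Suc i)) \<partial>P) \<partial>PiM J (\<lambda>_. P))"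
    using integrable_ma_W_ma_zeta[OF assms(2)] unfolding I(1)
    by (rule product_integral_insert[OF I(3,2)])
  also have "\<dots> = (\<integral>\<omega>. ?g \<omega> \<partial>PiM J (\<lambda>_. P))"
    by (simp add: ma_zeta_Suc ma_zeta_fun_upd)
  also have "\<dots> = (\<integral>\<omega>. (\<integral>z. ?g (\<omega> (Suc i := z)) \<partial>P) \<partial>PiM J (\<lambda>_. P))"
    by (simp add: ma_zeta_fun_upd prob_space)
  also have "\<dots> = (\<integral>\<omega>. ?g \<omega> \<partial>PiM I (\<lambda>_. P))"
    using integrable_integral_ma_W_ma_zeta[OF sub] unfolding I(1)
    by (rule product_integral_insert[OF I(3,2), symmetric])
  finally show ?thesis ..
qed

definition potential_drop :: "nat \<Rightarrow> (nat \<Rightarrow> 'z) \<Rightarrow> real" where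
  "potential_drop n \<omega> =
     (\<Sum>i<n. ma_W \<beta> (ma_zeta Q \<omega> i) - (\<integral>z. ma_W \<beta> (ma_zeta Q \<omega> i + ma_u Q z) \<partial>P)) / n"

lemma integrable_potential_drop: "integrable (PiM {1..n - 1} (\<lambda>_. P)) (potential_drop n)"
  unfolding potential_drop_def
  by (intro integrable_divide Bochner_Integration.integrable_sum Bochner_Integration.integrable_diff
      integrable_ma_W_ma_zeta integrable_integral_ma_W_ma_zeta) auto

lemma integral_ma_W_shift_ma_zeta_ge:
  assumes "{1..i} \<subseteq> I"
  shows "- (Suc i * (\<integral>z. Q z (axis j 1) \<partial>P)) - \<beta> * ln (real CARD('m))
           \<le> (\<integral>\<omega>. (\<integral>z. ma_W \<beta> (ma_zeta Q \<omega> i + ma_u Q z) \<partial>P) \<partial>PiM I (\<lambda>_. P))"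
proof -
  interpret M: prob_space "PiM I (\<lambda>_. P)" by (rule prob_space_samples)
  let ?A = "\<integral>z. Q z (axis j 1) \<partial>P" and ?c = "\<beta> * ln (real CARD('m))"
  have "(\<integral>\<omega>. - (ma_zeta Q \<omega> i $ j) - ?A - ?c \<partial>PiM I (\<lambda>_. P))
      \<le> (\<integral>\<omega>. (\<integral>z. ma_W \<beta> (ma_zeta Q \<omega> i + ma_u Q z) \<partial>P) \<partial>PiM I (\<lambda>_. P))"
    using integral_ma_W_shift_ge integrable_integral_ma_W_ma_zeta[OF assms] integrable_ma_zeta[OF assms]
    by (intro integral_mono) auto
  moreover have "(\<integral>\<omega>. - (ma_zeta Q \<omega> i $ j) - ?A - ?c \<partial>PiM I (\<lambda>_. P)) = - (i * ?A) - ?A - ?c"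
    using integrable_ma_zeta[OF assms] integral_ma_zeta[OF assms, of j]
    by (simp add: Bochner_Integration.integral_diff M.prob_space)
  ultimately show ?thesis
    by (simp add: algebra_simps)
qed

lemma integral_potential_drop_le:
  assumes "n \<ge> 1"
  shows "(\<integral>\<omega>. potential_drop n \<omega> \<partial>PiM {1..n - 1} (\<lambda>_. P))
           \<le> (\<integral>z. Q z (axis j 1) \<partial>P) + \<beta> * ln (real CARD('m)) / n"
proof -
  obtain m where n: "n = Suc m" using assms by (cases n) auto
  define I where "I = {1..m}"
  let ?M = "PiM I (\<lambda>_. P)"
  define L where "L i = (\<integral>\<omega>. ma_W \<beta> (ma_zeta Q \<omega> i) \<partial>?M)" for i
  define G where "G i = (\<integral>\<omega>. (\<integral>z. ma_W \<beta> (ma_zeta Q \<omega> i + ma_u Q z) \<partial>P) \<partial>?M)" for i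
  have sub: "{1..i} \<subseteq> I" if "i < n" for i
    using that unfolding I_def n by auto
  have int: "integrable ?M (\<lambda>\<omega>. ma_W \<beta> (ma_zeta Q \<omega> i) - (\<integral>z. ma_W \<beta> (ma_zeta Q \<omega> i + ma_u Q z) \<partial>P))"
    and "(\<integral>\<omega>. ma_W \<beta> (ma_zeta Q \<omega> i) - (\<integral>z. ma_W \<beta> (ma_zeta Q \<omega> i + ma_u Q z) \<partial>P) \<partial>?M)
      = L i - G i" if "i < n" for i
    unfolding L_def G_def using integrable_ma_W_ma_zeta[OF sub[OF that]]
      integrable_integral_ma_W_ma_zeta[OF sub[OF that]] by auto
  then have "(\<integral>\<omega>. potential_drop n \<omega> \<partial>?M) = (\<Sum>i<n. L i - G i) / n"
    unfolding potential_drop_def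
    by (subst integral_divide_zero, subst Bochner_Integration.integral_sum) simp_all
  also have "(\<Sum>i<n. L i - G i) = (\<Sum>i<m. L i - L (Suc i)) + (L m - G m)"
    unfolding n G_def L_def using sub n by (simp add: integral_ma_W_step I_def)
  also have "\<dots> = - G m"
    using sum_lessThan_telescope'[of L m] by (simp add: L_def ma_zeta_0 ma_W_zero)
  also have "- G m \<le> n * (\<integral>z. Q z (axis j 1) \<partial>P) + \<beta> * ln (real CARD('m))"
    unfolding G_def n using integral_ma_W_shift_ma_zeta_ge[of m I j] by (simp add: I_def)
  finally show ?thesis
    unfolding I_def n using assms by (simp add: divide_right_mono add_divide_distrib)
qed

end

locale mirror_averaging_Psi = mirror_averaging P Q \<beta>
  for P :: "'z measure" and Q :: "'z \<Rightarrow> real ^ 'm \<Rightarrow> real" and \<beta> +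
  fixes \<Psi> :: "real ^ 'm \<Rightarrow> real ^ 'm \<Rightarrow> real"
  assumes Q_measurable: "(\<lambda>(z, \<theta>). Q z \<theta>) \<in> borel_measurable (P \<Otimes>\<^sub>M restrict_space borel Theta)"
    and Psi_nonneg: "\<And>\<theta> \<theta>'. \<theta> \<in> Theta \<Longrightarrow> \<theta>' \<in> Theta \<Longrightarrow> \<Psi> \<theta> \<theta>' \<ge> 0"
    and Psi_concave: "\<And>\<theta>'. \<theta>' \<in> Theta \<Longrightarrow> concave_on Theta (\<lambda>\<theta>. \<Psi> \<theta> \<theta>')"
    and Psi_diag: "\<And>\<theta>. \<theta> \<in> Theta \<Longrightarrow> \<Psi> \<theta> \<theta> = 1"
    and Psi_bound: "\<And>\<theta> \<theta>'. \<theta> \<in> Theta \<Longrightarrow> \<theta>' \<in> Theta \<Longrightarrow>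
          (\<integral>\<^sup>+ z. ennreal (exp (- (Q z \<theta> - Q z \<theta>') / \<beta>)) \<partial>P) \<le> ennreal (\<Psi> \<theta> \<theta>')"
begin

lemma
  assumes "\<theta> \<in> Theta" "\<theta>' \<in> Theta"
  shows integrable_exp_loss_diff: "integrable P (\<lambda>z. exp (- (Q z \<theta> - Q z \<theta>') / \<beta>))"
    and integral_exp_loss_diff_le: "(\<integral>z. exp (- (Q z \<theta> - Q z \<theta>') / \<beta>) \<partial>P) \<le> \<Psi> \<theta> \<theta>'"
proof -
  have [measurable]: "(\<lambda>z. Q z \<theta>) \<in> borel_measurable P" "(\<lambda>z. Q z \<theta>') \<in> borel_measurable P"
    using measurable_slice_restrict_space[OF Q_measurable] assms by auto
  show "integrable P (\<lambda>z. exp (- (Q z \<theta> - Q z \<theta>') / \<beta>))"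
    and "(\<integral>z. exp (- (Q z \<theta> - Q z \<theta>') / \<beta>) \<partial>P) \<le> \<Psi> \<theta> \<theta>'"
    using Psi_nonneg[OF assms] Psi_bound[OF assms]
    by (auto intro!: integrable_nonneg_nn_integral_le)
qed

lemma
  assumes "\<theta> \<in> Theta"
  shows integrable_weighted_exp_vertex:
      "integrable P (\<lambda>z. \<Sum>k\<in>UNIV. \<theta> $ k * exp (- (Q z (axis k 1) - Q z \<theta>) / \<beta>))"
    and integral_weighted_exp_vertex_le:
      "(\<integral>z. (\<Sum>k\<in>UNIV. \<theta> $ k * exp (- (Q z (axis k 1) - Q z \<theta>) / \<beta>)) \<partial>P) \<le> 1"
proof -
  show "integrable P (\<lambda>z. \<Sum>k\<in>UNIV. \<theta> $ k * exp (- (Q z (axis k 1) - Q z \<theta>) / \<beta>))"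
    using assms axis_in_Theta
    by (intro Bochner_Integration.integrable_sum integrable_mult_right integrable_exp_loss_diff) auto
  have "(\<integral>z. (\<Sum>k\<in>UNIV. \<theta> $ k * exp (- (Q z (axis k 1) - Q z \<theta>) / \<beta>)) \<partial>P)
      = (\<Sum>k\<in>UNIV. \<theta> $ k * (\<integral>z. exp (- (Q z (axis k 1) - Q z \<theta>) / \<beta>) \<partial>P))"
    using integrable_exp_loss_diff[OF axis_in_Theta assms]
    by (subst Bochner_Integration.integral_sum) auto
  also have "\<dots> \<le> (\<Sum>k\<in>UNIV. \<theta> $ k * \<Psi> (axis k 1) \<theta>)"
    using assms axis_in_Theta
    by (intro sum_mono mult_left_mono integral_exp_loss_diff_le) (auto simp: Theta_def)
  also have "\<dots> \<le> \<Psi> \<theta> \<theta>"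
    using assms by (intro concave_on_Theta_vertices Psi_concave)
  finally show "(\<integral>z. (\<Sum>k\<in>UNIV. \<theta> $ k * exp (- (Q z (axis k 1) - Q z \<theta>) / \<beta>)) \<partial>P) \<le> 1"
    using Psi_diag[OF assms] by simp
qed

lemma sum_integral_exp_loss_diff_average_le:
  assumes "n \<ge> 1" "\<And>i. i < n \<Longrightarrow> \<theta> i \<in> Theta"
    and h: "h = (\<Sum>i<n. (1 / real n) *\<^sub>R \<theta> i)"
  shows "(\<Sum>i<n. \<integral>z. exp (- (Q z (\<theta> i) - Q z h) / \<beta>) \<partial>P) \<le> n"
proof -
  have "h \<in> Theta"
    unfolding h using assms(1,2) by (intro convex_sum[OF _ convex_Theta]) auto
  have "(\<Sum>i<n. (1 / real n) * (\<integral>z. exp (- (Q z (\<theta> i) - Q z h) / \<beta>) \<partial>P))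
      \<le> (\<Sum>i<n. (1 / real n) * \<Psi> (\<theta> i) h)"
    using assms(2) \<open>h \<in> Theta\<close> by (intro sum_mono mult_left_mono integral_exp_loss_diff_le) auto
  also have "\<dots> \<le> \<Psi> h h"
    unfolding h using assms(1,2) \<open>h \<in> Theta\<close>
    by (intro concave_on_sum[OF _ _ Psi_concave]) (auto simp: lessThan_empty_iff simp flip: h)
  finally have "(1 / real n) * (\<Sum>i<n. \<integral>z. exp (- (Q z (\<theta> i) - Q z h) / \<beta>) \<partial>P) \<le> 1"
    using Psi_diag[OF \<open>h \<in> Theta\<close>] by (simp add: sum_distrib_left)
  then show ?thesis
    using assms(1) by (simp add: field_simps)
qed

definition step_bound :: "real ^ 'm \<Rightarrow> real ^ 'm \<Rightarrow> 'z \<Rightarrow> real" where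
  "step_bound h \<zeta> z =
     \<beta> * (exp (- (Q z (ma_weights \<beta> \<zeta>) - Q z h) / \<beta>) - 1)
     + \<beta> * ((\<Sum>k\<in>UNIV. ma_weights \<beta> \<zeta> $ k * exp (- (Q z (axis k 1) - Q z (ma_weights \<beta> \<zeta>)) / \<beta>)) - 1)
     + (ma_W \<beta> \<zeta> - ma_W \<beta> (\<zeta> + ma_u Q z))"

lemma loss_le_step_bound: "Q z h \<le> step_bound h \<zeta> z"
  using ma_weights_step_le[OF beta_pos, of "Q z h" "Q z (ma_weights \<beta> \<zeta>)" \<zeta> "ma_u Q z"]
  by (simp add: step_bound_def ma_u_def)

lemma
  assumes "h \<in> Theta"
  shows integrable_step_bound: "integrable P (step_bound h \<zeta>)"
    and integral_step_bound_le: "integral\<^sup>L P (step_bound h \<zeta>)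
      \<le> \<beta> * ((\<integral>z. exp (- (Q z (ma_weights \<beta> \<zeta>) - Q z h) / \<beta>) \<partial>P) - 1)
        + (ma_W \<beta> \<zeta> - (\<integral>z. ma_W \<beta> (\<zeta> + ma_u Q z) \<partial>P))"
proof -
  let ?\<theta> = "ma_weights \<beta> \<zeta>"
  let ?F = "\<lambda>z. exp (- (Q z ?\<theta> - Q z h) / \<beta>)"
  let ?E = "\<lambda>z. \<Sum>k\<in>UNIV. ?\<theta> $ k * exp (- (Q z (axis k 1) - Q z ?\<theta>) / \<beta>)"
  have F: "integrable P ?F"
    using ma_weights_in_Theta assms by (rule integrable_exp_loss_diff)
  have E: "integrable P ?E" and E_le: "integral\<^sup>L P ?E \<le> 1"
    using ma_weights_in_Theta by (rule integrable_weighted_exp_vertex, rule integral_weighted_exp_vertex_le)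
  have W: "integrable P (\<lambda>z. ma_W \<beta> (\<zeta> + ma_u Q z))"
    by (rule integrable_ma_W_shift)
  have "step_bound h \<zeta> = (\<lambda>z. \<beta> * (?F z - 1) + \<beta> * (?E z - 1) + (ma_W \<beta> \<zeta> - ma_W \<beta> (\<zeta> + ma_u Q z)))"
    by (simp add: step_bound_def fun_eq_iff)
  moreover have "integrable P (\<lambda>z. \<beta> * (?F z - 1) + \<beta> * (?E z - 1) + (ma_W \<beta> \<zeta> - ma_W \<beta> (\<zeta> + ma_u Q z)))"
    and "(\<integral>z. \<beta> * (?F z - 1) + \<beta> * (?E z - 1) + (ma_W \<beta> \<zeta> - ma_W \<beta> (\<zeta> + ma_u Q z)) \<partial>P)
      = \<beta> * (integral\<^sup>L P ?F - 1) + \<beta> * (integral\<^sup>L P ?E - 1)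
        + (ma_W \<beta> \<zeta> - (\<integral>z. ma_W \<beta> (\<zeta> + ma_u Q z) \<partial>P))"
    using F E W by (simp_all add: prob_space)
  moreover have "\<beta> * (integral\<^sup>L P ?E - 1) \<le> 0"
    using E_le beta_pos by (simp add: mult_nonneg_nonpos)
  ultimately show "integrable P (step_bound h \<zeta>)"
    and "integral\<^sup>L P (step_bound h \<zeta>)
      \<le> \<beta> * (integral\<^sup>L P ?F - 1) + (ma_W \<beta> \<zeta> - (\<integral>z. ma_W \<beta> (\<zeta> + ma_u Q z) \<partial>P))"
    by simp_all
qed

lemma expected_loss_ma_hat_le:
  assumes "n \<ge> 1"
  shows "ext_expectation P (\<lambda>z. Q z (ma_hat \<beta> Q n \<omega>)) \<le> ereal (potential_drop n \<omega>)"
proof -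
  define \<zeta> where "\<zeta> i = ma_zeta Q \<omega> i" for i
  define h where "h = ma_hat \<beta> Q n \<omega>"
  have "h \<in> Theta"
    unfolding h_def using assms by (rule ma_hat_in_Theta)
  have h: "h = (\<Sum>i<n. (1 / real n) *\<^sub>R ma_weights \<beta> (\<zeta> i))"
    by (simp add: h_def \<zeta>_def ma_hat_eq_average ma_theta_eq_ma_weights)
  have "Q z h \<le> (\<Sum>i<n. step_bound h (\<zeta> i) z) / n" for z
    using sum_mono[of "{..<n}" "\<lambda>_. Q z h", OF loss_le_step_bound] assms by (simp add: field_simps)
  then have "ext_expectation P (\<lambda>z. Q z h) \<le> ereal (\<integral>z. (\<Sum>i<n. step_bound h (\<zeta> i) z) / n \<partial>P)"
    using integrable_step_bound[OF \<open>h \<in> Theta\<close>] by (intro ext_expectation_le_integral) auto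
  also have "(\<integral>z. (\<Sum>i<n. step_bound h (\<zeta> i) z) / n \<partial>P) = (\<Sum>i<n. integral\<^sup>L P (step_bound h (\<zeta> i))) / n"
    using integrable_step_bound[OF \<open>h \<in> Theta\<close>] by (simp add: Bochner_Integration.integral_sum)
  also have "\<dots> \<le> (\<Sum>i<n. \<beta> * ((\<integral>z. exp (- (Q z (ma_weights \<beta> (\<zeta> i)) - Q z h) / \<beta>) \<partial>P) - 1)
      + (ma_W \<beta> (\<zeta> i) - (\<integral>z. ma_W \<beta> (\<zeta> i + ma_u Q z) \<partial>P))) / n"
    using integral_step_bound_le[OF \<open>h \<in> Theta\<close>] by (intro divide_right_mono sum_mono) auto
  also have "\<dots> = \<beta> * ((\<Sum>i<n. \<integral>z. exp (- (Q z (ma_weights \<beta> (\<zeta> i)) - Q z h) / \<beta>) \<partial>P) - n) / n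
      + potential_drop n \<omega>"
    by (simp add: potential_drop_def \<zeta>_def sum.distrib sum_subtractf add_divide_distrib sum_distrib_left
        right_diff_distrib)
  also have "\<dots> \<le> potential_drop n \<omega>"
    using sum_integral_exp_loss_diff_average_le[OF assms ma_weights_in_Theta h] beta_pos
    by (simp add: divide_nonpos_nonneg mult_nonneg_nonpos)
  finally show ?thesis
    unfolding h_def by simp
qed

lemma expected_risk_ma_hat_le:
  assumes "n \<ge> 1"
  shows "ext_expectation_ereal (PiM {1..n - 1} (\<lambda>_. P)) (\<lambda>\<omega>. ext_expectation P (\<lambda>z. Q z (ma_hat \<beta> Q n \<omega>)))
           \<le> ereal (\<integral>z. Q z (axis j 1) \<partial>P) + ereal (\<beta> * ln (real CARD('m)) / n)"
proof -
  have "ext_expectation_ereal (PiM {1..n - 1} (\<lambda>_. P)) (\<lambda>\<omega>. ext_expectation P (\<lambda>z. Q z (ma_hat \<beta> Q n \<omega>)))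
      \<le> ereal (\<integral>\<omega>. potential_drop n \<omega> \<partial>PiM {1..n - 1} (\<lambda>_. P))"
    using assms expected_loss_ma_hat_le integrable_potential_drop
    by (intro ext_expectation_ereal_le_integral)
  also have "\<dots> \<le> ereal ((\<integral>z. Q z (axis j 1) \<partial>P) + \<beta> * ln (real CARD('m)) / n)"
    using integral_potential_drop_le[OF assms] by simp
  finally show ?thesis by simp
qed

end

theorem theorem4p2:
  fixes P :: "'z measure"
    and Q :: "'z \<Rightarrow> real ^ 'm \<Rightarrow> real"
    and \<Psi> :: "real ^ 'm \<Rightarrow> real ^ 'm \<Rightarrow> real"
    and \<beta> :: real and n :: nat
  assumes "prob_space P"
    and "CARD('m) \<ge> 2"
    and "n \<ge> 1"
    and Q_meas: "(\<lambda>(z, \<theta>). Q z \<theta>) \<in> borel_measurable (P \<Otimes>\<^sub>M restrict_space borel Theta)"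
    and A_exists: "\<And>\<theta>. \<theta> \<in> Theta \<Longrightarrow> ext_expectation_exists P (\<lambda>z. Q z \<theta>)"
    and A_vertex_finite: "\<And>j. integrable P (\<lambda>z. Q z (axis j 1))"
    and "\<beta> > 0"
    and Psi_meas: "(\<lambda>(\<theta>, \<theta>'). \<Psi> \<theta> \<theta>') \<in> borel_measurable (restrict_space borel (Theta \<times> Theta))"
    and Psi_nonneg: "\<And>\<theta> \<theta>'. \<theta> \<in> Theta \<Longrightarrow> \<theta>' \<in> Theta \<Longrightarrow> \<Psi> \<theta> \<theta>' \<ge> 0"
    and Psi_concave: "\<And>\<theta>'. \<theta>' \<in> Theta \<Longrightarrow> concave_on Theta (\<lambda>\<theta>. \<Psi> \<theta> \<theta>')"
    and Psi_diag: "\<And>\<theta>. \<theta> \<in> Theta \<Longrightarrow> \<Psi> \<theta> \<theta> = 1"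
    and Psi_bound: "\<And>\<theta> \<theta>'. \<theta> \<in> Theta \<Longrightarrow> \<theta>' \<in> Theta \<Longrightarrow>
          (\<integral>\<^sup>+ z. ennreal (exp (- (Q z \<theta> - Q z \<theta>') / \<beta>)) \<partial>P) \<le> ennreal (\<Psi> \<theta> \<theta>')"
  shows "ext_expectation_ereal (PiM {1..n-1} (\<lambda>_. P))
            (\<lambda>\<omega>. ext_expectation P (\<lambda>z. Q z (ma_hat \<beta> Q n \<omega>)))
         \<le> (MIN j. ext_expectation P (\<lambda>z. Q z (axis j 1)))
            + ereal (\<beta> * ln (real CARD('m)) / real n)"
proof -
  interpret mirror_averaging_Psi P Q \<beta> \<Psi>
    by (intro mirror_averaging_Psi.intro mirror_averaging.intro mirror_averaging_axioms.intro
        mirror_averaging_Psi_axioms.intro) (fact assms)+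
  obtain j where "(MIN j. ext_expectation P (\<lambda>z. Q z (axis j 1))) = ext_expectation P (\<lambda>z. Q z (axis j 1))"
    using Min_in[of "range (\<lambda>j. ext_expectation P (\<lambda>z. Q z (axis j 1)))"] by fastforce
  then show ?thesis
    using expected_risk_ma_hat_le[OF \<open>n \<ge> 1\<close>, of j]
    by (simp add: ext_expectation_integrable[OF integrable_vertex])
qed

end
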